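(* Under the Setting and Algorithm described in the context, if $\{x_k\}_{k\ge1}$ is generated by the inexact CSA algorithm with policy (P1), then $\mathcal B\neq\emptyset$, so that $\bar x_{N,s}$ is well defined.
   Context: Setting. $\mathcal X\subset\mathbb R^n$ is convex and compact; $f:\mathcal X\to\mathbb R$ is convex and $L_f$-Lipschitz; $\Delta\subset\mathbb R^d$ is compact; $g:\mathcal X\times\Delta\to\mathbb R$ is such that for every $\delta\in\Delta$, $x\mapsto g(x,\delta)$ is convex and $L_{g,\mathcal X}$-Lipschitz, and for every $x\in\mathcal X$, $\delta\mapsto g(x,\delta)$ is $L_{g,\Delta}$-Lipschitz. Let $G(x):=\max_{\delta\in\Delta}g(x,\delta)$ and assume the problem $\min_{x\in\mathcal X}\{f(x):G(x)\le0\}$ has an optimal solution $x^*$. Norms are Euclidean. $f'(x)$ denotes a subgradient of $f$ at $x$ and $g'(x,\delta)$ a subgradient of $g(\cdot,\delta)$ at $x$. Let $\omega_{\mathcal X}:\mathcal X\to\mathbb R$ be continuously differentiable and $1$-strongly convex; $V(x,z):=\omega_{\mathcal X}(z)-\omega_{\mathcal X}(x)-\langle\nabla\omega_{\mathcal X}(x),z-x\rangle$; prox-mapping $P_{x,\mathcal X}(y):=\arg\min_{z\in\mathcal X}\{\langle y,z\rangle+V(x,z)\}$; $D_{\mathcal X}:=\sqrt{\max_{x,z\in\mathcal X}V(x,z)}$. Algorithm (inexact CSA). Inputs: $N\ge1$, $x_1\in\mathcal X$, tolerances $\eta_k>0$, step-sizes $\gamma_k>0$. For $k=1,\dots,N$: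 choose some $\delta_k\in\Delta$ (an approximate maximizer of $g(x_k,\cdot)$); set $h_k=f'(x_k)$ if $g(x_k,\delta_k)\le\eta_k$ and $h_k=g'(x_k,\delta_k)$ otherwise; set $x_{k+1}=P_{x_k,\mathcal X}(\gamma_kh_k)$. For $1\le s\le N$ let $I=\{s,\dots,N\}$, $\mathcal B:=\{k\in I: g(x_k,\delta_k)\le\eta_k\}$, $\mathcal N:=I\setminus\mathcal B$, and output $\bar x_{N,s}:=\sum_{k\in\mathcal B}\gamma_kx_k/\sum_{k\in\mathcal B}\gamma_k$. Policy (P1): $\eta_k=\frac{6(L_f+L_{g,\mathcal X})D_{\mathcal X}}{\sqrt k}$, $\gamma_k=\frac{D_{\mathcal X}}{\sqrt k(L_f+L_{g,\mathcal X})}$ for $k=1,\dots,N$, and $s=\lceil N/2\rceil$. *)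

theory Defs
  imports "HOL-Analysis.Analysis"
begin

definition strongly_convex_on :: "real \<Rightarrow> 'a::real_normed_vector set \<Rightarrow> ('a \<Rightarrow> real) \<Rightarrow> bool" where
  "strongly_convex_on mu S w \<longleftrightarrow> convex S \<and>
     (\<forall>x\<in>S. \<forall>y\<in>S. \<forall>t::real. 0 \<le> t \<and> t \<le> 1 \<longrightarrow>
        w (t *\<^sub>R x + (1 - t) *\<^sub>R y) \<le> t * w x + (1 - t) * w y - mu / 2 * t * (1 - t) * (norm (x - y))\<^sup>2)"

definition is_subgradient :: "'a::real_inner set \<Rightarrow> ('a \<Rightarrow> real) \<Rightarrow> 'a \<Rightarrow> 'a \<Rightarrow> bool" where
  "is_subgradient X f x v \<longleftrightarrow> (\<forall>z\<in>X. f z \<ge> f x + inner v (z - x))"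

definition bregman :: "('a::real_inner \<Rightarrow> real) \<Rightarrow> ('a \<Rightarrow> 'a) \<Rightarrow> 'a \<Rightarrow> 'a \<Rightarrow> real" where
  "bregman w gw x z = w z - w x - inner (gw x) (z - x)"

definition is_prox :: "('a::real_inner \<Rightarrow> real) \<Rightarrow> ('a \<Rightarrow> 'a) \<Rightarrow> 'a set \<Rightarrow> 'a \<Rightarrow> 'a \<Rightarrow> 'a \<Rightarrow> bool" where
  "is_prox w gw X x y z \<longleftrightarrow> z \<in> X \<and>
     (\<forall>u\<in>X. inner y z + bregman w gw x z \<le> inner y u + bregman w gw x u)"

definition diamD :: "('a::real_inner \<Rightarrow> real) \<Rightarrow> ('a \<Rightarrow> 'a) \<Rightarrow> 'a set \<Rightarrow> real" where
  "diamD w gw X = sqrt (Sup ((\<lambda>(x, z). bregman w gw x z) ` (X \<times> X)))"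

definition Gmax :: "('a \<Rightarrow> 'b \<Rightarrow> real) \<Rightarrow> 'b set \<Rightarrow> 'a \<Rightarrow> real" where
  "Gmax g Delta x = Sup (g x ` Delta)"

end

theory Submission imports Defs begin

text \<open>If every step k \<ge> s were a constraint step, then g(x*, \<delta>_k) \<le> 0 < \<eta>_k < g(x_k, \<delta>_k)
and the subgradient inequality give \<eta>_k < \<langle>h_k, x_k - x*\<rangle>. Plugged into the standard
mirror-descent inequality
  \<gamma>_k \<langle>h_k, x_k - x*\<rangle> \<le> \<gamma>_k^2 \<parallel>h_k\<parallel>^2 / 2 + V(x_k, x*) - V(x_{k+1}, x*),
policy (P1) makes the Bregman distance to x* drop by at least (11/2) D^2/k per step.
Summed over k = s..N, where the harmonic tail is at least 1/2, this exceeds the initial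
distance V(x_s, x*) \<le> D^2, which is impossible unless D = 0 or L_f + L_{g,X} = 0; in those
degenerate cases \<eta>_s = 0 and \<langle>h_s, x_s - x*\<rangle> = 0 directly.\<close>

lemma has_derivative_right_difference_quotient:
  fixes w :: "'a::real_inner \<Rightarrow> real"
  assumes "convex X" "z \<in> X" "u \<in> X" "(w has_derivative (\<lambda>v. inner g v)) (at z within X)"
  shows "((\<lambda>t. (w (z + t *\<^sub>R (u - z)) - w z) / t) \<longlongrightarrow> inner g (u - z)) (at_right 0)"
proof -
  define p where "p = (\<lambda>t::real. z + t *\<^sub>R (u - z))"
  have p_deriv: "(p has_derivative (\<lambda>t. t *\<^sub>R (u - z))) (at 0 within {0..1})"
    unfolding p_def by (auto intro!: derivative_eq_intros)
  have segment: "p ` {0..1} \<subseteq> X"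
  proof
    fix y assume "y \<in> p ` {0..1}"
    then obtain t where t: "t \<in> {0..1}" "y = p t" by auto
    have "y = (1 - t) *\<^sub>R z + t *\<^sub>R u" using t by (simp add: p_def algebra_simps)
    then show "y \<in> X" using assms(1,2,3) t by (auto intro: convexD_alt)
  qed
  have "(w has_derivative (\<lambda>v. inner g v)) (at (p 0) within p ` {0..1})"
    using has_derivative_subset[OF assms(4) segment] by (simp add: p_def)
  from diff_chain_within[OF p_deriv this]
  have "((w \<circ> p) has_field_derivative (inner g (u - z))) (at 0 within {0..1})"
    by (simp add: has_field_derivative_def o_def mult.commute[of _ "inner g (u - z)"])
  then have "((\<lambda>t. ((w \<circ> p) t - (w \<circ> p) 0) / (t - 0)) \<longlongrightarrow> inner g (u - z)) (at 0 within {0..1})"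
    by (simp add: has_field_derivative_iff)
  then show ?thesis
    by (simp add: at_within_Icc_at_right p_def)
qed

lemma strongly_convex_bregman_ge:
  fixes w :: "'a::real_inner \<Rightarrow> real"
  assumes sc: "strongly_convex_on 1 X w" and x: "x \<in> X" and u: "u \<in> X"
    and wd: "(w has_derivative (\<lambda>v. inner (gw x) v)) (at x within X)"
  shows "(norm (u - x))\<^sup>2 / 2 \<le> bregman w gw x u"
proof -
  have "convex X" using sc by (simp add: strongly_convex_on_def)
  note quotient = has_derivative_right_difference_quotient[OF this x u wd]
  have bound: "((\<lambda>t::real. w u - w x - (1 - t) / 2 * (norm (u - x))\<^sup>2)
      \<longlongrightarrow> w u - w x - (1 - 0) / 2 * (norm (u - x))\<^sup>2) (at_right 0)"
    by (intro tendsto_intros) simp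
  have "\<forall>\<^sub>F t in at_right (0::real). t \<in> {0<..<1}" by (rule eventually_at_right_real) simp
  then have "\<forall>\<^sub>F t in at_right 0.
      (w (x + t *\<^sub>R (u - x)) - w x) / t \<le> w u - w x - (1 - t) / 2 * (norm (u - x))\<^sup>2"
  proof eventually_elim
    case (elim t)
    then have t: "0 < t" "t < 1" by auto
    have "w (t *\<^sub>R u + (1 - t) *\<^sub>R x) \<le> t * w u + (1 - t) * w x - 1 / 2 * t * (1 - t) * (norm (u - x))\<^sup>2"
      using sc u x t unfolding strongly_convex_on_def by auto
    moreover have "t *\<^sub>R u + (1 - t) *\<^sub>R x = x + t *\<^sub>R (u - x)" by (simp add: algebra_simps)
    ultimately have "w (x + t *\<^sub>R (u - x)) - w x \<le> t * (w u - w x - (1 - t) / 2 * (norm (u - x))\<^sup>2)"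
      by (simp add: algebra_simps)
    then show ?case using t by (simp add: divide_le_eq mult.commute)
  qed
  from tendsto_le[OF trivial_limit_at_right_real bound quotient this]
  show ?thesis by (simp add: bregman_def field_simps)
qed

corollary strongly_convex_bregman_nonneg:
  fixes w :: "'a::real_inner \<Rightarrow> real"
  assumes "strongly_convex_on 1 X w" "x \<in> X" "u \<in> X"
    and "(w has_derivative (\<lambda>v. inner (gw x) v)) (at x within X)"
  shows "0 \<le> bregman w gw x u"
  using strongly_convex_bregman_ge[where gw=gw, OF assms] zero_le_power2[of "norm (u - x)"] by linarith

lemma prox_three_point:
  fixes w :: "'a::real_inner \<Rightarrow> real"
  assumes cX: "convex X" and u: "u \<in> X"
    and wd: "(w has_derivative (\<lambda>v. inner (gw z) v)) (at z within X)"
    and pr: "is_prox w gw X x y z"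
  shows "inner y (z - u) \<le> bregman w gw x u - bregman w gw x z - bregman w gw z u"
proof -
  have z: "z \<in> X" using pr by (simp add: is_prox_def)
  have lim: "((\<lambda>t. inner (y - gw x) (u - z) + (w (z + t *\<^sub>R (u - z)) - w z) / t)
      \<longlongrightarrow> inner (y - gw x) (u - z) + inner (gw z) (u - z)) (at_right 0)"
    by (intro tendsto_intros has_derivative_right_difference_quotient[OF cX z u wd])
  have "\<forall>\<^sub>F t in at_right (0::real). t \<in> {0<..<1}" by (rule eventually_at_right_real) simp
  then have "\<forall>\<^sub>F t in at_right 0. 0 \<le> inner (y - gw x) (u - z) + (w (z + t *\<^sub>R (u - z)) - w z) / t"
  proof eventually_elim
    case (elim t)
    then have t: "0 < t" "t < 1" by auto
    have "z + t *\<^sub>R (u - z) = (1 - t) *\<^sub>R z + t *\<^sub>R u" by (simp add: algebra_simps)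
    then have "z + t *\<^sub>R (u - z) \<in> X" using cX z u t by (auto intro: convexD_alt)
    then have "inner y z + bregman w gw x z \<le> inner y (z + t *\<^sub>R (u - z)) + bregman w gw x (z + t *\<^sub>R (u - z))"
      using pr by (simp add: is_prox_def)
    then have "0 \<le> t * inner (y - gw x) (u - z) + (w (z + t *\<^sub>R (u - z)) - w z)"
      by (simp add: bregman_def algebra_simps)
    then have "0 \<le> (t * inner (y - gw x) (u - z) + (w (z + t *\<^sub>R (u - z)) - w z)) / t"
      using t by simp
    then show ?case using t by (simp add: add_divide_distrib)
  qed
  from tendsto_lowerbound[OF lim this trivial_limit_at_right_real]
  show ?thesis by (simp add: bregman_def algebra_simps)
qed

lemma prox_descent:
  fixes w :: "'a::real_inner \<Rightarrow> real"
  assumes sc: "strongly_convex_on 1 X w"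
    and wd: "\<And>v. v \<in> X \<Longrightarrow> (w has_derivative (\<lambda>d. inner (gw v) d)) (at v within X)"
    and x: "x \<in> X" and u: "u \<in> X" and pr: "is_prox w gw X x y z"
  shows "inner y (x - u) \<le> (norm y)\<^sup>2 / 2 + bregman w gw x u - bregman w gw z u"
proof -
  have z: "z \<in> X" using pr by (simp add: is_prox_def)
  have "convex X" using sc by (simp add: strongly_convex_on_def)
  note three_point = prox_three_point[OF this u wd[OF z] pr]
  note strong = strongly_convex_bregman_ge[where gw=gw, OF sc x z wd[OF x]]
  have "inner y (x - z) \<le> norm y * norm (z - x)"
    using norm_cauchy_schwarz[of y "x - z"] by (simp add: norm_minus_commute)
  also have "\<dots> \<le> (norm y)\<^sup>2 / 2 + (norm (z - x))\<^sup>2 / 2"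
    using sum_squares_bound[of "norm y" "norm (z - x)"] by (simp add: power2_eq_square field_simps)
  finally have "inner y (x - z) \<le> (norm y)\<^sup>2 / 2 + (norm (z - x))\<^sup>2 / 2" .
  moreover have "inner y (x - u) = inner y (x - z) + inner y (z - u)"
    by (simp add: inner_diff_right)
  ultimately show ?thesis using three_point strong by linarith
qed

lemma bdd_above_bregman:
  fixes w :: "'a::real_inner \<Rightarrow> real"
  assumes X: "compact X"
    and wd: "\<And>v. v \<in> X \<Longrightarrow> (w has_derivative (\<lambda>d. inner (gw v) d)) (at v within X)"
    and gw_cont: "continuous_on X gw"
  shows "bdd_above ((\<lambda>(c, d). bregman w gw c d) ` (X \<times> X))"
proof -
  have "continuous_on X w"
    using wd has_derivative_continuous continuous_on_eq_continuous_within by blast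
  then obtain Mw where Mw: "\<And>v. v \<in> X \<Longrightarrow> norm (w v) \<le> Mw"
    using continuous_on_compact_bound[OF X] by metis
  obtain Mg where Mg: "0 \<le> Mg" "\<And>v. v \<in> X \<Longrightarrow> norm (gw v) \<le> Mg"
    using continuous_on_compact_bound[OF X gw_cont] by metis
  obtain R where R: "\<And>v. v \<in> X \<Longrightarrow> norm v \<le> R"
    using compact_imp_bounded[OF X] unfolding bounded_iff by auto
  have "bregman w gw c d \<le> 2 * Mw + Mg * (2 * R)" if c: "c \<in> X" and d: "d \<in> X" for c d
  proof -
    have "norm (d - c) \<le> 2 * R" using R[OF c] R[OF d] norm_triangle_ineq4[of d c] by linarith
    then have "norm (gw c) * norm (d - c) \<le> Mg * (2 * R)"
      using Mg c by (intro mult_mono) auto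
    then have "\<bar>inner (gw c) (d - c)\<bar> \<le> Mg * (2 * R)"
      using Cauchy_Schwarz_ineq2[of "gw c" "d - c"] by linarith
    then show ?thesis using Mw[OF c] Mw[OF d] unfolding bregman_def by auto
  qed
  then show ?thesis by (auto intro!: bdd_aboveI[where M = "2 * Mw + Mg * (2 * R)"])
qed

lemma bregman_le_diamD_sq:
  fixes w :: "'a::real_inner \<Rightarrow> real"
  assumes bdd: "bdd_above ((\<lambda>(c, d). bregman w gw c d) ` (X \<times> X))" and a: "a \<in> X" and b: "b \<in> X"
  shows "0 \<le> diamD w gw X" and "bregman w gw a b \<le> (diamD w gw X)\<^sup>2"
proof -
  define S where "S = Sup ((\<lambda>(c, d). bregman w gw c d) ` (X \<times> X))"
  have le_S: "bregman w gw c d \<le> S" if "c \<in> X" "d \<in> X" for c d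
    unfolding S_def using bdd that by (intro cSup_upper) auto
  have "0 \<le> S" using le_S[OF a a] by (simp add: bregman_def)
  then show "0 \<le> diamD w gw X" and "bregman w gw a b \<le> (diamD w gw X)\<^sup>2"
    using le_S[OF a b] by (simp_all add: diamD_def S_def)
qed

lemma diamD_eq_0_imp_eq:
  fixes w :: "'a::real_inner \<Rightarrow> real"
  assumes sc: "strongly_convex_on 1 X w"
    and wd: "\<And>v. v \<in> X \<Longrightarrow> (w has_derivative (\<lambda>d. inner (gw v) d)) (at v within X)"
    and bdd: "bdd_above ((\<lambda>(c, d). bregman w gw c d) ` (X \<times> X))"
    and D0: "diamD w gw X = 0" and a: "a \<in> X" and b: "b \<in> X"
  shows "a = b"
proof -
  have "(norm (b - a))\<^sup>2 / 2 \<le> (diamD w gw X)\<^sup>2"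
    using strongly_convex_bregman_ge[where gw=gw, OF sc a b wd[OF a]]
      bregman_le_diamD_sq(2)[OF bdd a b] by linarith
  then show ?thesis using D0 by simp
qed

lemma le_Gmax:
  assumes "compact Delta" "continuous_on Delta (g u)" "d \<in> Delta"
  shows "g u d \<le> Gmax g Delta u"
  unfolding Gmax_def
  using assms by (intro cSup_upper bounded_imp_bdd_above compact_imp_bounded compact_continuous_image) auto

lemma prox_iterates_in:
  fixes x :: "nat \<Rightarrow> 'a::real_inner"
  assumes "x 1 \<in> X" and step: "\<And>k. k \<in> {1..N} \<Longrightarrow> is_prox w gw X (x k) (y k) (x (k + 1))"
    and k: "k \<in> {1..N + 1}"
  shows "x k \<in> X"
proof -
  from k have "1 \<le> k" "k \<le> N + 1" by auto
  then show ?thesis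
  proof (induction k rule: dec_induct)
    case base then show ?case using assms(1) by simp
  next
    case (step m)
    then show ?case using assms(2)[of m] by (simp add: is_prox_def)
  qed
qed

lemma ceiling_half_bounds:
  fixes N :: nat assumes "1 \<le> N"
  shows "1 \<le> nat \<lceil>real N / 2\<rceil>" "nat \<lceil>real N / 2\<rceil> \<le> N" "2 * nat \<lceil>real N / 2\<rceil> \<le> N + 1"
proof -
  have "real N / 2 \<le> of_int \<lceil>real N / 2\<rceil>" "of_int \<lceil>real N / 2\<rceil> < real N / 2 + 1"
    by linarith+
  then have "1 \<le> \<lceil>real N / 2\<rceil>" "2 * \<lceil>real N / 2\<rceil> \<le> int N + 1"
    using assms by linarith+
  then show "1 \<le> nat \<lceil>real N / 2\<rceil>" "nat \<lceil>real N / 2\<rceil> \<le> N" "2 * nat \<lceil>real N / 2\<rceil> \<le> N + 1"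
    by linarith+
qed

lemma sum_inverse_from_ceiling_half_ge:
  fixes N :: nat assumes "1 \<le> N"
  shows "1 / 2 \<le> (\<Sum>k = nat \<lceil>real N / 2\<rceil>..N. 1 / real k)"
proof -
  define s where "s = nat \<lceil>real N / 2\<rceil>"
  note s = ceiling_half_bounds[OF assms, folded s_def]
  have "1 / 2 \<le> real (N + 1 - s) / real N"
    using s assms by (simp add: field_simps)
  also have "\<dots> = (\<Sum>k = s..N. 1 / real N)" by simp
  also have "\<dots> \<le> (\<Sum>k = s..N. 1 / real k)"
    using s by (intro sum_mono divide_left_mono) auto
  finally show ?thesis unfolding s_def .
qed

lemma sum_le_of_telescoping_decrease:
  fixes V c :: "nat \<Rightarrow> real"
  assumes "s \<le> Suc N" and "\<And>k. k \<in> {s..N} \<Longrightarrow> c k \<le> V k - V (Suc k)" and "0 \<le> V (Suc N)"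
  shows "(\<Sum>k = s..N. c k) \<le> V s"
proof -
  have "(\<Sum>k = s..N. c k) \<le> (\<Sum>k = s..N. V k - V (Suc k))"
    using assms(2) by (rule sum_mono)
  also have "\<dots> = V s - V (Suc N)"
    using sum_Suc_diff[OF assms(1), of "\<lambda>k. - V k"] by simp
  finally show ?thesis using assms(3) by linarith
qed

lemma harmonic_decrease_from_ceiling_half:
  fixes V :: "nat \<Rightarrow> real" and N :: nat
  assumes N: "1 \<le> N"
    and decrease: "\<And>k. k \<in> {nat \<lceil>real N / 2\<rceil>..N} \<Longrightarrow> c * (1 / real k) \<le> V k - V (Suc k)"
    and "0 \<le> V (Suc N)" and "0 \<le> c"
  shows "c / 2 \<le> V (nat \<lceil>real N / 2\<rceil>)"
proof -
  define s where "s = nat \<lceil>real N / 2\<rceil>"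
  have "s \<le> Suc N" using ceiling_half_bounds(2)[OF N] by (simp add: s_def)
  from sum_le_of_telescoping_decrease[where V=V, OF this decrease[folded s_def] assms(3)]
  have "c * (\<Sum>k = s..N. 1 / real k) \<le> V s" by (simp add: sum_distrib_left)
  moreover have "c * (1 / 2) \<le> c * (\<Sum>k = s..N. 1 / real k)"
    using sum_inverse_from_ceiling_half_ge[OF N, folded s_def] \<open>0 \<le> c\<close> by (rule mult_left_mono)
  ultimately show ?thesis by (simp add: s_def)
qed

lemma subgradient_gap_at_feasible:
  assumes "compact Delta" "continuous_on Delta (g u)" "Gmax g Delta u \<le> 0" "d \<in> Delta" "u \<in> X"
    and "is_subgradient X (\<lambda>v. g v d) x h" "\<eta> < g x d"
  shows "\<eta> < inner h (x - u)"
  using le_Gmax[of Delta g u d] assms by (auto simp: is_subgradient_def inner_diff_right)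

text \<open>Under (P1), \<gamma>_k \<eta>_k = 6 D^2/k and \<gamma>_k^2 L^2 = D^2/k, whence the net decrease
(6 - 1/2) D^2/k.\<close>
lemma prox_step_decrease_P1:
  fixes w :: "'a::real_inner \<Rightarrow> real" and k :: nat
  assumes sc: "strongly_convex_on 1 X w"
    and wd: "\<And>v. v \<in> X \<Longrightarrow> (w has_derivative (\<lambda>d. inner (gw v) d)) (at v within X)"
    and x: "x \<in> X" and u: "u \<in> X"
    and pr: "is_prox w gw X x ((D / (sqrt (real k) * L)) *\<^sub>R h) z"
    and L: "0 < L" and D: "0 \<le> D" and k: "0 < k" and h: "norm h \<le> L"
    and gap: "6 * L * D / sqrt (real k) \<le> inner h (x - u)"
  shows "11 / 2 * (D\<^sup>2 / real k) \<le> bregman w gw x u - bregman w gw z u"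
proof -
  define \<gamma> where "\<gamma> = D / (sqrt (real k) * L)"
  have \<gamma>: "0 \<le> \<gamma>" using L D by (simp add: \<gamma>_def)
  have "\<gamma> * inner h (x - u) \<le> (\<gamma> * norm h)\<^sup>2 / 2 + (bregman w gw x u - bregman w gw z u)"
    using prox_descent[OF sc wd x u pr[folded \<gamma>_def]] \<gamma> by (simp add: power_mult_distrib)
  moreover have "\<gamma> * (6 * L * D / sqrt (real k)) = 6 * (D\<^sup>2 / real k)"
    using L k by (simp add: \<gamma>_def field_simps power2_eq_square)
  moreover have "\<gamma> * (6 * L * D / sqrt (real k)) \<le> \<gamma> * inner h (x - u)"
    using gap \<gamma> by (rule mult_left_mono)
  moreover have "(\<gamma> * norm h)\<^sup>2 \<le> (\<gamma> * L)\<^sup>2"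
    using h \<gamma> by (intro power_mono mult_left_mono) auto
  moreover have "(\<gamma> * L)\<^sup>2 = D\<^sup>2 / real k"
    using L k by (simp add: \<gamma>_def field_simps power2_eq_square)
  ultimately show ?thesis by linarith
qed

theorem mainTheorem3:
  fixes X :: "'a::euclidean_space set" and Delta :: "'b::euclidean_space set"
    and f :: "'a \<Rightarrow> real" and g :: "'a \<Rightarrow> 'b \<Rightarrow> real"
    and Lf Lgx LgD :: real
    and w :: "'a \<Rightarrow> real" and gw :: "'a \<Rightarrow> 'a"
    and xstar :: 'a and N :: nat
    and x :: "nat \<Rightarrow> 'a" and delta :: "nat \<Rightarrow> 'b" and h :: "nat \<Rightarrow> 'a"
    and eta gamma :: "nat \<Rightarrow> real"
  assumes X_convex: "convex X" and X_compact: "compact X"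
    and f_convex: "convex_on X f" and f_lip: "lipschitz_on Lf X f"
    and Delta_compact: "compact Delta"
    and g_convex: "\<And>d. d \<in> Delta \<Longrightarrow> convex_on X (\<lambda>u. g u d)"
    and g_lipX: "\<And>d. d \<in> Delta \<Longrightarrow> lipschitz_on Lgx X (\<lambda>u. g u d)"
    and g_lipD: "\<And>u. u \<in> X \<Longrightarrow> lipschitz_on LgD Delta (g u)"
    and xstar_in: "xstar \<in> X" and xstar_feas: "Gmax g Delta xstar \<le> 0"
    and xstar_opt: "\<And>u. u \<in> X \<Longrightarrow> Gmax g Delta u \<le> 0 \<Longrightarrow> f xstar \<le> f u"
    and w_deriv: "\<And>u. u \<in> X \<Longrightarrow> (w has_derivative (\<lambda>v. inner (gw u) v)) (at u within X)"
    and gw_cont: "continuous_on X gw"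
    and w_sc: "strongly_convex_on 1 X w"
    and N_pos: "N \<ge> 1"
    and x1: "x 1 \<in> X"
    and delta_in: "\<And>k. k \<in> {1..N} \<Longrightarrow> delta k \<in> Delta"
    and h_f: "\<And>k. k \<in> {1..N} \<Longrightarrow> g (x k) (delta k) \<le> eta k \<Longrightarrow>
                 is_subgradient X f (x k) (h k) \<and> norm (h k) \<le> Lf"
    and h_g: "\<And>k. k \<in> {1..N} \<Longrightarrow> \<not> g (x k) (delta k) \<le> eta k \<Longrightarrow>
                 is_subgradient X (\<lambda>u. g u (delta k)) (x k) (h k) \<and> norm (h k) \<le> Lgx"
    and x_step: "\<And>k. k \<in> {1..N} \<Longrightarrow> is_prox w gw X (x k) (gamma k *\<^sub>R h k) (x (k + 1))"
    and eta_def: "\<And>k. k \<in> {1..N} \<Longrightarrow>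
                   eta k = 6 * (Lf + Lgx) * diamD w gw X / sqrt (real k)"
    and gamma_def: "\<And>k. k \<in> {1..N} \<Longrightarrow>
                   gamma k = diamD w gw X / (sqrt (real k) * (Lf + Lgx))"
  shows "{k \<in> {nat \<lceil>real N / 2\<rceil>..N}. g (x k) (delta k) \<le> eta k} \<noteq> {}"
proof
  assume no_objective_step: "{k \<in> {nat \<lceil>real N / 2\<rceil>..N}. g (x k) (delta k) \<le> eta k} = {}"
  define s D L where "s = nat \<lceil>real N / 2\<rceil>" and "D = diamD w gw X" and "L = Lf + Lgx"
  define V where "V k = bregman w gw (x k) xstar" for k
  note s = ceiling_half_bounds[OF N_pos, folded s_def]
  note bdd = bdd_above_bregman[OF X_compact w_deriv gw_cont]
  have x_in: "x k \<in> X" if "k \<in> {1..N + 1}" for k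
    using prox_iterates_in[where y="\<lambda>k. gamma k *\<^sub>R h k", OF x1 x_step that] .
  have L_nonneg: "0 \<le> L" and D_nonneg: "0 \<le> D"
    using lipschitz_on_nonneg[OF f_lip] lipschitz_on_nonneg[OF g_lipX[OF delta_in[of 1]]] N_pos
      bregman_le_diamD_sq(1)[OF bdd xstar_in xstar_in] by (auto simp: L_def D_def)
  have gap: "eta k < inner (h k) (x k - xstar) \<and> norm (h k) \<le> L" if "k \<in> {s..N}" for k
  proof -
    from that s have k: "k \<in> {1..N}" by auto
    with that no_objective_step have "eta k < g (x k) (delta k)" by (auto simp: s_def)
    with h_g[OF k] lipschitz_on_nonneg[OF f_lip] show ?thesis
      using subgradient_gap_at_feasible[OF Delta_compact
          lipschitz_on_continuous_on[OF g_lipD[OF xstar_in]] xstar_feas delta_in[OF k] xstar_in]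
      by (auto simp: L_def)
  qed
  have eta: "eta k = 6 * L * D / sqrt (real k)" if "k \<in> {1..N}" for k
    using eta_def[OF that] by (simp add: D_def L_def)
  have DL_pos: "0 < D \<and> 0 < L"
  proof (rule ccontr)
    assume "\<not> (0 < D \<and> 0 < L)"
    then have "D = 0 \<or> L = 0" using D_nonneg L_nonneg by linarith
    moreover have "x s = xstar" if "D = 0"
      using diamD_eq_0_imp_eq[OF w_sc w_deriv bdd _ x_in xstar_in] that s by (auto simp: D_def)
    ultimately show False using gap[of s] eta[of s] s by auto
  qed
  have "11 / 2 * D\<^sup>2 * (1 / real k) \<le> V k - V (Suc k)" if "k \<in> {s..N}" for k
  proof -
    from that s have k: "k \<in> {1..N}" by auto
    have "is_prox w gw X (x k) ((D / (sqrt (real k) * L)) *\<^sub>R h k) (x (Suc k))"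
      using x_step[OF k] gamma_def[OF k] by (simp add: D_def L_def)
    from prox_step_decrease_P1[OF w_sc w_deriv x_in xstar_in this] gap[OF that] eta[OF k] DL_pos k
    show ?thesis by (simp add: V_def)
  qed
  moreover have "0 \<le> V (Suc N)"
    using strongly_convex_bregman_nonneg[where gw=gw, OF w_sc x_in xstar_in w_deriv[OF x_in], of "Suc N"]
    by (simp add: V_def)
  ultimately have "11 / 2 * D\<^sup>2 / 2 \<le> V s"
    unfolding s_def by (rule harmonic_decrease_from_ceiling_half[OF N_pos]) auto
  moreover have "V s \<le> D\<^sup>2"
    using bregman_le_diamD_sq(2)[OF bdd x_in xstar_in] s by (simp add: V_def D_def)
  ultimately have "D\<^sup>2 \<le> 0" by linarith
  with DL_pos show False by simp
qed

end
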